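(* Let $p,q$ be positive integers and let $\mathbb T$ be a finite rooted tree whose root has at most $q$ children, in which every other vertex in an even layer has at most $q$ children and every vertex in an odd layer has at most $p$ children. Then its adjacency matrix $A^{\mathbb T}$ satisfies $\|A^{\mathbb T}\|\le\sqrt p+\sqrt q$.
   Context: Layers are indexed by distance from the root; the root forms layer $0$ (even). $\|\cdot\|$ denotes the operator norm. *)

theory Defs
  imports "HOL-Analysis.Analysis"
begin

text \<open>The edges are
{v, par v} for v \<noteq> r (the value par r is irrelevant).\<close>

definition rooted_tree :: "'n::finite \<Rightarrow> ('n \<Rightarrow> 'n) \<Rightarrow> bool" where
  "rooted_tree r par \<longleftrightarrow> (\<forall>v. \<exists>k. (par ^^ k) v = r)"

definition tree_depth :: "'n \<Rightarrow> ('n \<Rightarrow> 'n) \<Rightarrow> 'n \<Rightarrow> nat" where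
  "tree_depth r par v = (LEAST k. (par ^^ k) v = r)"

definition tree_children :: "'n \<Rightarrow> ('n \<Rightarrow> 'n) \<Rightarrow> 'n \<Rightarrow> 'n set" where
  "tree_children r par u = {v. v \<noteq> r \<and> par v = u}"

definition tree_adj :: "'n::finite \<Rightarrow> ('n \<Rightarrow> 'n) \<Rightarrow> real ^ 'n ^ 'n" where
  "tree_adj r par = (\<chi> i j. if (i \<noteq> r \<and> par i = j) \<or> (j \<noteq> r \<and> par j = i) then 1 else 0)"

end

theory Submission
  imports Defs
begin

text \<open>Every edge joins a vertex to one of its children, so the edges split according to the
parity of the layer of the parent. Within one class every vertex is either a centre (a parent of
that parity) or a child of exactly one centre, and the two roles exclude each other; hence each
class is a disjoint union of stars, and a star with at most \<open>m\<close> leaves has norm at most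
\<open>sqrt m\<close>. The even-parent stars have at most \<open>q\<close> leaves and the odd-parent stars
at most \<open>p\<close>, so the triangle inequality gives the bound.\<close>

lemma tree_depth_root: "tree_depth r par r = 0"
  unfolding tree_depth_def by (rule Least_eq_0) simp

lemma tree_depth_par:
  assumes "rooted_tree r par" and "v \<noteq> r"
  shows "tree_depth r par v = Suc (tree_depth r par (par v))"
proof -
  have reaches_root: "\<exists>k. (par ^^ k) w = r" for w
    using assms(1) unfolding rooted_tree_def by blast
  define d where "d = tree_depth r par v"
  define e where "e = tree_depth r par (par v)"
  have d: "(par ^^ d) v = r" and e: "(par ^^ e) (par v) = r"
    unfolding d_def e_def tree_depth_def by (rule LeastI_ex[OF reaches_root])+
  obtain d' where d': "d = Suc d'"
    using d assms(2) by (cases d) auto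
  have "(par ^^ d') (par v) = r"
    using d d' by (simp add: funpow_Suc_right del: funpow.simps)
  hence "e \<le> d'"
    unfolding e_def tree_depth_def by (rule Least_le)
  moreover have "(par ^^ Suc e) v = r"
    using e by (simp add: funpow_Suc_right del: funpow.simps)
  hence "d \<le> Suc e"
    unfolding d_def tree_depth_def by (rule Least_le)
  ultimately show ?thesis
    using d' unfolding d_def e_def by simp
qed

lemma even_tree_depth_par_iff:
  assumes "rooted_tree r par" and "v \<noteq> r"
  shows "even (tree_depth r par (par v)) \<longleftrightarrow> odd (tree_depth r par v)"
  using tree_depth_par[OF assms] by simp

lemma power2_norm_vec_eq_sum: "(norm x)\<^sup>2 = (\<Sum>i\<in>UNIV. (x $ i)\<^sup>2)"
  unfolding power2_norm_eq_inner inner_vec_def by (simp add: power2_eq_square)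

lemma power2_norm_vec_eq_sum_split:
  fixes x :: "real ^ 'n"
  shows "(norm x)\<^sup>2 = (\<Sum>i | P i. (x $ i)\<^sup>2) + (\<Sum>i | \<not> P i. (x $ i)\<^sup>2)"
proof -
  have "(\<Sum>i | P i. (x $ i)\<^sup>2) + (\<Sum>i | \<not> P i. (x $ i)\<^sup>2)
      = (\<Sum>i\<in>UNIV. (if P i then (x $ i)\<^sup>2 else 0) + (if \<not> P i then (x $ i)\<^sup>2 else 0))"
    by (simp add: sum.inter_filter[symmetric] sum.distrib)
  also have "\<dots> = (norm x)\<^sup>2"
    unfolding power2_norm_vec_eq_sum by (intro sum.cong) auto
  finally show ?thesis ..
qed

definition star_forest_adj :: "'n::finite \<Rightarrow> ('n \<Rightarrow> 'n) \<Rightarrow> ('n \<Rightarrow> bool) \<Rightarrow> real ^ 'n ^ 'n" where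
  "star_forest_adj r par C =
     (\<chi> i j. if (i \<noteq> r \<and> par i = j \<and> C j) \<or> (j \<noteq> r \<and> par j = i \<and> C i) then 1 else 0)"

lemma tree_adj_eq_star_forest_adj_add:
  assumes "rooted_tree r par"
  shows "tree_adj r par =
    star_forest_adj r par (\<lambda>u. even (tree_depth r par u)) +
    star_forest_adj r par (\<lambda>u. odd (tree_depth r par u))"
proof -
  have not_mutual_parents: "\<not> (i \<noteq> r \<and> par i = j \<and> j \<noteq> r \<and> par j = i)" for i j
    using tree_depth_par[OF assms, of i] tree_depth_par[OF assms, of j] by auto
  show ?thesis
    using not_mutual_parents
    unfolding tree_adj_def star_forest_adj_def by (auto simp: vec_eq_iff)
qed

lemma sum_tree_children:
  fixes par :: "'n::finite \<Rightarrow> 'n"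
  shows "(\<Sum>u | C u. \<Sum>c\<in>tree_children r par u. g c) = (\<Sum>c | c \<noteq> r \<and> C (par c). g c)"
proof -
  have "tree_children r par u = {c \<in> {c. c \<noteq> r \<and> C (par c)}. par c = u}" if "C u" for u
    using that unfolding tree_children_def by auto
  hence "(\<Sum>u | C u. \<Sum>c\<in>tree_children r par u. g c)
      = (\<Sum>u | C u. \<Sum>c\<in>{c \<in> {c. c \<noteq> r \<and> C (par c)}. par c = u}. g c)"
    by (intro sum.cong) auto
  also have "\<dots> = (\<Sum>c | c \<noteq> r \<and> C (par c). g c)"
    by (rule sum.group) auto
  finally show ?thesis .
qed

context
  fixes r :: "'n::finite" and par :: "'n \<Rightarrow> 'n" and C :: "'n \<Rightarrow> bool" and m :: nat
  assumes child_not_centre: "\<And>v. v \<noteq> r \<Longrightarrow> C (par v) \<Longrightarrow> \<not> C v"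
    and card_children_le: "\<And>u. C u \<Longrightarrow> card (tree_children r par u) \<le> m"
begin

lemma sum_sq_centre_entries_le:
  fixes x :: "real ^ 'n"
  shows "(\<Sum>i | i \<noteq> r \<and> C (par i). (x $ par i)\<^sup>2) \<le> real m * (\<Sum>u | C u. (x $ u)\<^sup>2)"
proof -
  have "(\<Sum>i | i \<noteq> r \<and> C (par i). (x $ par i)\<^sup>2)
      = (\<Sum>u | C u. \<Sum>c\<in>tree_children r par u. (x $ par c)\<^sup>2)"
    by (rule sum_tree_children[symmetric])
  also have "\<dots> = (\<Sum>u | C u. card (tree_children r par u) * (x $ u)\<^sup>2)"
    by (intro sum.cong) (auto simp: tree_children_def)
  also have "\<dots> \<le> (\<Sum>u | C u. m * (x $ u)\<^sup>2)"
    by (intro sum_mono mult_right_mono) (auto simp: card_children_le)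
  finally show ?thesis
    by (simp add: sum_distrib_left)
qed

lemma sum_sq_children_sums_le:
  fixes x :: "real ^ 'n"
  shows "(\<Sum>u | C u. (\<Sum>c\<in>tree_children r par u. x $ c)\<^sup>2) \<le> real m * (\<Sum>u | \<not> C u. (x $ u)\<^sup>2)"
proof -
  have "(\<Sum>u | C u. (\<Sum>c\<in>tree_children r par u. x $ c)\<^sup>2)
      \<le> (\<Sum>u | C u. m * (\<Sum>c\<in>tree_children r par u. (x $ c)\<^sup>2))"
  proof (intro sum_mono)
    fix u assume "u \<in> {u. C u}"
    hence card_le: "card (tree_children r par u) \<le> m"
      by (simp add: card_children_le)
    have "(\<Sum>c\<in>tree_children r par u. x $ c)\<^sup>2
        \<le> (\<Sum>c\<in>tree_children r par u. (x $ c)\<^sup>2) * card (tree_children r par u)"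
      by (rule sum_squared_le_sum_of_squares)
    also have "\<dots> \<le> (\<Sum>c\<in>tree_children r par u. (x $ c)\<^sup>2) * m"
      using card_le by (intro mult_left_mono sum_nonneg) auto
    finally show "(\<Sum>c\<in>tree_children r par u. x $ c)\<^sup>2
        \<le> m * (\<Sum>c\<in>tree_children r par u. (x $ c)\<^sup>2)"
      by (simp add: mult.commute)
  qed
  also have "\<dots> = m * (\<Sum>c | c \<noteq> r \<and> C (par c). (x $ c)\<^sup>2)"
    by (simp add: sum_distrib_left[symmetric] sum_tree_children)
  also have "\<dots> \<le> m * (\<Sum>u | \<not> C u. (x $ u)\<^sup>2)"
    using child_not_centre by (intro mult_left_mono sum_mono2) auto
  finally show ?thesis .
qed

lemma star_forest_adj_mult_vec:
  "(star_forest_adj r par C *v x) $ i =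
     (if i \<noteq> r \<and> C (par i) then x $ par i else 0) +
     (if C i then \<Sum>c\<in>tree_children r par i. x $ c else 0)"
proof -
  have "(star_forest_adj r par C *v x) $ i =
      (\<Sum>j\<in>UNIV. (if i \<noteq> r \<and> C (par i) \<and> j = par i then x $ j else 0)
                + (if C i \<and> j \<in> tree_children r par i then x $ j else 0))"
    using child_not_centre
    unfolding matrix_vector_mult_def star_forest_adj_def tree_children_def
    by (auto intro!: sum.cong)
  thus ?thesis
    by (simp add: sum.distrib sum.inter_filter[symmetric])
qed

lemma norm_star_forest_adj_mult_vec_le:
  "norm (star_forest_adj r par C *v x) \<le> sqrt m * norm x"
proof -
  define a where "a i = (if i \<noteq> r \<and> C (par i) then x $ par i else 0)" for i
  define b where "b i = (if C i then \<Sum>c\<in>tree_children r par i. x $ c else 0)" for i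
  \<comment> \<open>\<open>a\<close> lives on children of centres and \<open>b\<close> on centres, which are disjoint\<close>
  have orthogonal: "a i * b i = 0" for i
    using child_not_centre unfolding a_def b_def by auto
  have "(norm (star_forest_adj r par C *v x))\<^sup>2 = (\<Sum>i\<in>UNIV. (a i + b i)\<^sup>2)"
    unfolding power2_norm_vec_eq_sum a_def b_def by (simp add: star_forest_adj_mult_vec)
  also have "\<dots> = (\<Sum>i\<in>UNIV. (a i)\<^sup>2) + (\<Sum>i\<in>UNIV. (b i)\<^sup>2)"
    by (simp add: power2_sum orthogonal sum.distrib mult.assoc)
  also have "\<dots> = (\<Sum>i | i \<noteq> r \<and> C (par i). (x $ par i)\<^sup>2)
                  + (\<Sum>u | C u. (\<Sum>c\<in>tree_children r par u. x $ c)\<^sup>2)"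
  proof -
    have "(a i)\<^sup>2 = (if i \<noteq> r \<and> C (par i) then (x $ par i)\<^sup>2 else 0)"
      and "(b i)\<^sup>2 = (if C i then (\<Sum>c\<in>tree_children r par i. x $ c)\<^sup>2 else 0)" for i
      unfolding a_def b_def by simp_all
    thus ?thesis
      by (simp add: sum.inter_filter[symmetric])
  qed
  also have "\<dots> \<le> m * (norm x)\<^sup>2"
    using sum_sq_centre_entries_le[of x] sum_sq_children_sums_le[of x]
    unfolding power2_norm_vec_eq_sum_split[of x C] distrib_left by (rule add_mono)
  finally have "norm (star_forest_adj r par C *v x) \<le> sqrt (m * (norm x)\<^sup>2)"
    by (rule real_le_rsqrt)
  thus ?thesis
    by (simp add: real_sqrt_mult)
qed

end

theorem lemmaC3:
  fixes p q :: nat and r :: "'n::finite" and par :: "'n \<Rightarrow> 'n"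
  assumes "p > 0" and "q > 0"
    and "rooted_tree r par"
    and "card (tree_children r par r) \<le> q"
    and "\<And>u. u \<noteq> r \<Longrightarrow> even (tree_depth r par u) \<Longrightarrow> card (tree_children r par u) \<le> q"
    and "\<And>u. odd (tree_depth r par u) \<Longrightarrow> card (tree_children r par u) \<le> p"
  shows "onorm (\<lambda>x. tree_adj r par *v x) \<le> sqrt (real p) + sqrt (real q)"
proof (rule onorm_le)
  fix x :: "real ^ 'n"
  let ?E = "star_forest_adj r par (\<lambda>u. even (tree_depth r par u))"
  let ?O = "star_forest_adj r par (\<lambda>u. odd (tree_depth r par u))"
  have card_even: "card (tree_children r par u) \<le> q" if "even (tree_depth r par u)" for u
    using assms(4,5) that by (cases "u = r") auto
  have "norm (?E *v x) \<le> sqrt q * norm x"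
    using card_even even_tree_depth_par_iff[OF assms(3)]
    by (intro norm_star_forest_adj_mult_vec_le) auto
  moreover have "norm (?O *v x) \<le> sqrt p * norm x"
    using assms(6) even_tree_depth_par_iff[OF assms(3)]
    by (intro norm_star_forest_adj_mult_vec_le) auto
  moreover have "norm (tree_adj r par *v x) \<le> norm (?E *v x) + norm (?O *v x)"
    unfolding tree_adj_eq_star_forest_adj_add[OF assms(3)] matrix_vector_mult_add_rdistrib
    by (rule norm_triangle_ineq)
  ultimately show "norm (tree_adj r par *v x) \<le> (sqrt p + sqrt q) * norm x"
    by (simp add: distrib_right)
qed

end
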